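(* For every $\varepsilon>0$ there exists $n_0$ such that every triangle-free graph $G$ on $n\ge n_0$ vertices satisfies \[ |\mathcal I(G)| \;\ge\; \exp\!\left[\left(\frac{\sqrt{2\log 2}}{4}-\varepsilon\right)\sqrt n\,\log n\right]. \]
   Context: $\mathcal I(G)$ denotes the set of all independent sets of $G$ (including the empty set). Logarithms are natural. *)

theory Defs
  imports "HOL-Analysis.Analysis"
begin

definition simple_graph :: "'a set \<Rightarrow> 'a set set \<Rightarrow> bool" where
  "simple_graph V E \<longleftrightarrow> finite V \<and> (\<forall>e\<in>E. e \<subseteq> V \<and> card e = 2)"

definition triangle_free :: "'a set \<Rightarrow> 'a set set \<Rightarrow> bool" where
  "triangle_free V E \<longleftrightarrow> \<not> (\<exists>x\<in>V. \<exists>y\<in>V. \<exists>z\<in>V. {x,y} \<in> E \<and> {y,z} \<in> E \<and> {x,z} \<in> E)"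

definition independent_sets :: "'a set \<Rightarrow> 'a set set \<Rightarrow> 'a set set" where
  "independent_sets V E = {S. S \<subseteq> V \<and> (\<forall>x\<in>S. \<forall>y\<in>S. {x,y} \<notin> E)}"

end

theory Submission imports Defs begin

text \<open>
  Consider the hard-core model \<open>Z(\<lambda>) = \<Sum>\<^sub>I \<lambda>\<^bsup>|I|\<^esup>\<close> on the independent sets of a
  triangle-free graph of maximum degree at most \<open>D\<close>. Revealing the independent set outside
  the closed neighbourhood of a vertex \<open>v\<close> leaves an independent set of free neighbours of \<open>v\<close>
  (here triangle-freeness enters), and comparing the probability that \<open>v\<close> is occupied with the
  expected number of occupied neighbours, after Jensen's inequality, gives
  \<open>\<lambda> Z'(\<lambda>)/Z(\<lambda>) \<ge> n t / (D (1+\<lambda>)\<^sup>2)\<close> whenever \<open>t \<le> D \<lambda> e\<^sup>-\<^sup>t\<close>. As \<open>log Z\<close> is convex in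
  \<open>log \<lambda>\<close>, integrating this occupancy bound from \<open>\<lambda> = 1/D\<close> to \<open>\<lambda> = 1\<close> yields
  \<open>log |\<I>(G)| \<ge> (1 - o(1)) n (log D)\<^sup>2 / (2D)\<close>. Choosing \<open>D\<close> of order \<open>\<surd>n log n\<close>, either some
  vertex has degree at least \<open>D\<close>, and the subsets of its neighbourhood already give
  \<open>2\<^sup>D\<close> independent sets, or the occupancy bound applies; the two bounds balance for
  \<open>D = \<surd>n log n / (2 \<surd>(2 log 2))\<close>.
\<close>

lemma sum_Pow_power:
  fixes l :: "'b::comm_semiring_1"
  assumes "finite A"
  shows "(\<Sum>S\<in>Pow A. l ^ card S) = (1 + l) ^ card A"
  using prod_add[OF assms, of "\<lambda>_. l" "\<lambda>_. 1"] by (simp add: add.commute)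

lemma sum_Pow_card_power:
  fixes l :: real
  assumes "finite A"
  shows "(1 + l) * (\<Sum>S\<in>Pow A. card S * l ^ card S) = card A * l * (1 + l) ^ card A"
  using assms
proof (induction A rule: finite_induct)
  case empty
  then show ?case by simp
next
  case (insert a A)
  define f where "f = (\<Sum>S\<in>Pow A. card S * l ^ card S)"
  have disjoint: "Pow A \<inter> insert a ` Pow A = {}"
    using insert by auto
  have inj: "inj_on (insert a) (Pow A)"
    using insert by (auto simp: inj_on_def)
  have card_insert: "card (insert a S) = card S + 1" if "S \<subseteq> A" for S
    using that insert(1,2) finite_subset[of S A] by (auto simp: card_insert_if)
  have "(\<Sum>S\<in>Pow (insert a A). card S * l ^ card S)
      = f + (\<Sum>S\<in>insert a ` Pow A. card S * l ^ card S)"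
    unfolding Pow_insert f_def using insert disjoint by (simp add: sum.union_disjoint)
  also have "(\<Sum>S\<in>insert a ` Pow A. card S * l ^ card S)
      = (\<Sum>S\<in>Pow A. l * (card S * l ^ card S) + l * l ^ card S)"
    using inj by (simp add: sum.reindex card_insert algebra_simps)
  also have "\<dots> = l * f + l * (1 + l) ^ card A"
    using insert(1) by (simp add: f_def sum.distrib sum_Pow_power flip: sum_distrib_left)
  finally have "(1 + l) * (\<Sum>S\<in>Pow (insert a A). card S * l ^ card S)
      = (1 + l) * ((1 + l) * f) + (1 + l) * l * (1 + l) ^ card A"
    by (simp add: algebra_simps)
  also have "\<dots> = (card A + 1) * l * (1 + l) ^ (card A + 1)"
    using insert(3) by (simp add: f_def algebra_simps)
  finally show ?case
    using insert by simp
qed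

text \<open>With \<open>k\<close> free neighbours, the expected number of occupied ones is the right-hand side divided
  by \<open>\<lambda> + (1+\<lambda>)\<^sup>k\<close>, which is thus at least \<open>k\<lambda>/(1+\<lambda>)\<^sup>2\<close>.\<close>
lemma sum_Pow_card_power_ge:
  fixes l :: real
  assumes l: "0 < l" and A: "finite A"
  shows "l / (1 + l)^2 * ((l + (1 + l) ^ card A) * card A) \<le> (\<Sum>S\<in>Pow A. card S * l ^ card S)"
proof -
  have "l + (1 + l) ^ card A \<le> (1 + l) * (1 + l) ^ card A"
    using l by (simp add: algebra_simps)
  then have "(l + (1 + l) ^ card A) * (card A * l) \<le> ((1 + l) * (1 + l) ^ card A) * (card A * l)"
    using l by (intro mult_right_mono) auto
  also have "\<dots> = (1 + l) * (card A * l * (1 + l) ^ card A)"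
    by (simp add: algebra_simps)
  also have "\<dots> = (1 + l)^2 * (\<Sum>S\<in>Pow A. card S * l ^ card S)"
    unfolding power2_eq_square mult.assoc[of "1 + l" "1 + l"] sum_Pow_card_power[OF A] ..
  finally show ?thesis
    using l by (simp add: field_simps)
qed

lemma exp_weighted_mean_le:
  fixes w y :: "'a \<Rightarrow> real"
  assumes A: "finite A" and w: "\<And>a. a \<in> A \<Longrightarrow> 0 \<le> w a" and pos: "0 < (\<Sum>a\<in>A. w a)"
  shows "(\<Sum>a\<in>A. w a) * exp ((\<Sum>a\<in>A. w a * y a) / (\<Sum>a\<in>A. w a)) \<le> (\<Sum>a\<in>A. w a * exp (y a))"
proof -
  define W where "W = (\<Sum>a\<in>A. w a)"
  have "A \<noteq> {}"
    using pos by auto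
  moreover have "(\<Sum>a\<in>A. w a / W) = 1"
    using pos by (simp add: W_def flip: sum_divide_distrib)
  ultimately have "exp (\<Sum>a\<in>A. (w a / W) *\<^sub>R y a) \<le> (\<Sum>a\<in>A. w a / W * exp (y a))"
    using pos w by (intro convex_on_sum[OF A _ exp_convex]) (auto simp: W_def)
  then show ?thesis
    using pos by (simp add: W_def sum_divide_distrib[symmetric] field_simps)
qed

text \<open>A vertex with \<open>k\<close> free neighbours is occupied with probability \<open>\<lambda> / (\<lambda> + (1+\<lambda>)\<^sup>k)\<close>,
  which is thus at least \<open>\<lambda> e\<^sup>-\<^sup>\<lambda>\<^sup>k / (1+\<lambda>)\<close>.\<close>
lemma occupied_weight_le:
  fixes l :: real
  assumes l: "0 < l"
  shows "l / (1 + l) * ((l + (1 + l) ^ k) * exp (- (l * k))) \<le> l"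
proof -
  have "(1 + l) ^ k \<le> exp l ^ k"
    using l by (intro power_mono) (auto simp: add.commute)
  then have "(1 + l) ^ k * exp (- (l * k)) \<le> 1"
    by (simp add: exp_minus field_simps flip: exp_of_nat_mult)
  moreover have "l * exp (- (l * k)) \<le> l"
    using l by (simp add: mult_le_cancel_left1)
  ultimately have "(l + (1 + l) ^ k) * exp (- (l * k)) \<le> 1 + l"
    by (simp add: algebra_simps)
  then have "l / (1 + l) * ((l + (1 + l) ^ k) * exp (- (l * k))) \<le> l / (1 + l) * (1 + l)"
    using l by (intro mult_left_mono) auto
  then show ?thesis
    using l by simp
qed

lemma self_le_exp_mult:
  fixes d u :: real
  assumes d: "0 < d" and u: "0 \<le> u" and large: "2 / d \<le> exp (d * u / 2)"
  shows "u \<le> exp (d * u)"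
proof -
  have "d * u / 2 \<le> exp (d * u / 2)"
    using exp_ge_add_one_self[of "d * u / 2"] by linarith
  then have "2 / d * (d * u / 2) \<le> exp (d * u / 2) * exp (d * u / 2)"
    using d u large by (intro mult_mono) auto
  then show ?thesis
    using d by (simp flip: exp_add)
qed

lemma correction_factor_ge:
  fixes \<eta> x :: real and m :: nat
  assumes \<eta>: "0 < \<eta>" "\<eta> < 1" and m: "4 / \<eta> \<le> m" and x: "0 \<le> x" "x \<le> \<eta> / 6"
  shows "1 - \<eta> \<le> (1 - \<eta> / 4) * (real m - 1) / (m * (1 + x)^2)"
proof -
  have "0 < 4 / \<eta>"
    using \<eta> by simp
  then have m0: "0 < real m"
    using m by linarith
  have "1 - \<eta> / 4 \<le> (real m - 1) / m"
    using m \<eta> m0 by (simp add: field_simps)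
  then have "(1 - \<eta> / 4) * (1 - \<eta> / 4) \<le> (1 - \<eta> / 4) * ((real m - 1) / m)"
    using \<eta> by (intro mult_left_mono) auto
  moreover have "(1 - \<eta> / 4) * (1 - \<eta> / 4) = 1 - \<eta> / 2 + \<eta> * \<eta> / 16"
    by (simp add: algebra_simps)
  moreover have "0 \<le> \<eta> * \<eta>" "(1 - \<eta> / 4) * ((real m - 1) / m) = (1 - \<eta> / 4) * (real m - 1) / m"
    by simp_all
  ultimately have num: "1 - \<eta> / 2 \<le> (1 - \<eta> / 4) * (real m - 1) / m"
    by linarith
  have "x * (2 + x) \<le> \<eta> / 6 * 3"
    using x \<eta> by (intro mult_mono) auto
  moreover have "(1 + x)^2 = 1 + x * (2 + x)"
    by (simp add: power2_eq_square algebra_simps)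
  ultimately have den: "(1 + x)^2 \<le> 1 + \<eta> / 2"
    by simp
  have "1 - \<eta> \<le> (1 - \<eta> / 2) / (1 + \<eta> / 2)"
    using \<eta> by (simp add: field_simps)
  also have "\<dots> \<le> ((1 - \<eta> / 4) * (real m - 1) / m) / (1 + x)^2"
    by (rule frac_le) (use num den \<eta> x in auto)
  finally show ?thesis
    by (simp only: divide_divide_eq_left)
qed

section \<open>Independent sets around a vertex\<close>

locale triangle_free_graph =
  fixes V :: "'a set" and E :: "'a set set"
  assumes simple: "simple_graph V E" and triangle_free: "triangle_free V E"
begin

abbreviation \<I> :: "'a set set" where "\<I> \<equiv> independent_sets V E"

definition nbhd :: "'a \<Rightarrow> 'a set" where
  "nbhd v = {u. {u, v} \<in> E}"

definition closed_nbhd :: "'a \<Rightarrow> 'a set" where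
  "closed_nbhd v = insert v (nbhd v)"

definition indep_avoiding :: "'a \<Rightarrow> 'a set set" where
  "indep_avoiding v = {J \<in> \<I>. J \<inter> closed_nbhd v = {}}"

definition free_nbrs :: "'a \<Rightarrow> 'a set \<Rightarrow> 'a set" where
  "free_nbrs v J = {u \<in> nbhd v. \<forall>w\<in>J. {u, w} \<notin> E}"

lemma finite_V: "finite V"
  using simple by (simp add: simple_graph_def)

lemma indep_sets_subset_Pow: "\<I> \<subseteq> Pow V"
  by (auto simp: independent_sets_def)

lemma finite_indep_sets: "finite \<I>"
  using indep_sets_subset_Pow finite_V by (meson finite_Pow_iff finite_subset)

lemma finite_indep_set: "I \<in> \<I> \<Longrightarrow> finite I"
  using indep_sets_subset_Pow finite_V finite_subset by blast

lemma indep_set_subset: "I \<in> \<I> \<Longrightarrow> J \<subseteq> I \<Longrightarrow> J \<in> \<I>"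
  by (auto simp: independent_sets_def)

lemma empty_indep_set: "{} \<in> \<I>"
  by (simp add: independent_sets_def)

lemma edge_endpoints: "{u, v} \<in> E \<Longrightarrow> u \<in> V \<and> v \<in> V \<and> u \<noteq> v"
proof -
  assume "{u, v} \<in> E"
  then have "{u, v} \<subseteq> V" "card {u, v} = 2"
    using simple by (auto simp: simple_graph_def)
  then show ?thesis
    by (auto split: if_splits)
qed

lemma nbhd_subset: "nbhd v \<subseteq> V"
  using edge_endpoints by (auto simp: nbhd_def)

lemma finite_nbhd: "finite (nbhd v)"
  using nbhd_subset finite_V finite_subset by blast

lemma not_in_nbhd: "v \<notin> nbhd v"
  using edge_endpoints[of v v] by (auto simp: nbhd_def)

lemma in_nbhd_commute: "u \<in> nbhd v \<longleftrightarrow> v \<in> nbhd u"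
  by (auto simp: nbhd_def insert_commute)

lemma nbhd_indep_set: "nbhd v \<in> \<I>"
proof -
  have "{x, y} \<notin> E" if "x \<in> nbhd v" "y \<in> nbhd v" for x y
  proof
    assume xy: "{x, y} \<in> E"
    have xv: "{x, v} \<in> E" and vy: "{v, y} \<in> E"
      using that by (auto simp: nbhd_def insert_commute)
    then have "x \<in> V" "y \<in> V" "v \<in> V"
      using edge_endpoints by auto
    then show False
      using triangle_free xy xv vy unfolding triangle_free_def by blast
  qed
  then show ?thesis
    using nbhd_subset by (auto simp: independent_sets_def)
qed

lemma free_nbrs_subset: "free_nbrs v J \<subseteq> nbhd v"
  by (auto simp: free_nbrs_def)

lemma finite_free_nbrs: "finite (free_nbrs v J)"
  using free_nbrs_subset finite_nbhd finite_subset by metis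

lemma finite_indep_avoiding: "finite (indep_avoiding v)"
  using finite_indep_sets by (simp add: indep_avoiding_def)

lemma finite_indep_set_avoiding: "J \<in> indep_avoiding v \<Longrightarrow> finite J"
  using finite_indep_set by (auto simp: indep_avoiding_def)

lemma card_insert_avoiding: "J \<in> indep_avoiding v \<Longrightarrow> card (insert v J) = card J + 1"
  using finite_indep_set_avoiding[of J v] by (auto simp: indep_avoiding_def closed_nbhd_def)

lemma card_Un_free_nbrs:
  assumes J: "J \<in> indep_avoiding v" and S: "S \<subseteq> free_nbrs v J"
  shows "card (J \<union> S) = card J + card S"
proof -
  have "finite S"
    using S finite_free_nbrs finite_subset by blast
  moreover have "J \<inter> S = {}"
    using J S free_nbrs_subset[of v J] by (auto simp: indep_avoiding_def closed_nbhd_def)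
  ultimately show ?thesis
    using finite_indep_set_avoiding[OF J] card_Un_disjoint by blast
qed

text \<open>
  An independent set either contains \<open>v\<close> and no neighbour of \<open>v\<close>, or it consists of an
  independent set avoiding the closed neighbourhood of \<open>v\<close> together with some of the
  neighbours of \<open>v\<close> left free by it; the latter are pairwise non-adjacent because the
  graph is triangle-free.
\<close>
lemma indep_sets_decompose:
  assumes v: "v \<in> V"
  shows "bij_betw (\<lambda>I. (I - closed_nbhd v, I \<inter> closed_nbhd v)) \<I>
           (SIGMA J:indep_avoiding v. insert {v} (Pow (free_nbrs v J)))"
proof (rule bij_betwI[where g = "\<lambda>(J, S). J \<union> S"])
  show "(\<lambda>I. (I - closed_nbhd v, I \<inter> closed_nbhd v))
          \<in> \<I> \<rightarrow> (SIGMA J:indep_avoiding v. insert {v} (Pow (free_nbrs v J)))"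
  proof
    fix I assume I: "I \<in> \<I>"
    have "I - closed_nbhd v \<in> indep_avoiding v"
      using I indep_set_subset[of I "I - closed_nbhd v"] by (auto simp: indep_avoiding_def)
    moreover have "I \<inter> closed_nbhd v \<in> insert {v} (Pow (free_nbrs v (I - closed_nbhd v)))"
    proof (cases "v \<in> I")
      case True
      then have "I \<inter> nbhd v = {}"
        using I by (auto simp: independent_sets_def nbhd_def)
      then show ?thesis
        using True by (auto simp: closed_nbhd_def)
    next
      case False
      then have "I \<inter> closed_nbhd v \<subseteq> free_nbrs v (I - closed_nbhd v)"
        using I by (auto simp: closed_nbhd_def free_nbrs_def independent_sets_def)
      then show ?thesis
        by auto
    qed
    ultimately show "(I - closed_nbhd v, I \<inter> closed_nbhd v)
                       \<in> (SIGMA J:indep_avoiding v. insert {v} (Pow (free_nbrs v J)))"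
      by auto
  qed
  show "(\<lambda>(J, S). J \<union> S) \<in> (SIGMA J:indep_avoiding v. insert {v} (Pow (free_nbrs v J))) \<rightarrow> \<I>"
  proof (clarsimp)
    fix J S
    assume J: "J \<in> indep_avoiding v" and S: "S = {v} \<or> S \<subseteq> free_nbrs v J"
    have "J \<in> \<I>" and Jv: "J \<inter> closed_nbhd v = {}"
      using J by (auto simp: indep_avoiding_def)
    show "J \<union> S \<in> \<I>"
    proof (cases "S = {v}")
      case True
      have "{x, v} \<notin> E" if "x \<in> J" for x
        using Jv that by (auto simp: closed_nbhd_def nbhd_def)
      moreover have "{v, v} \<notin> E"
        using edge_endpoints by blast
      ultimately show ?thesis
        using \<open>J \<in> \<I>\<close> True v by (auto simp: independent_sets_def insert_commute)
    next
      case False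
      then have S': "S \<subseteq> free_nbrs v J"
        using S by auto
      then have "S \<in> \<I>"
        using indep_set_subset[OF nbhd_indep_set] free_nbrs_subset by blast
      moreover have "{x, y} \<notin> E" "{y, x} \<notin> E" if "x \<in> S" "y \<in> J" for x y
        using S' that by (auto simp: free_nbrs_def insert_commute)
      ultimately show ?thesis
        using \<open>J \<in> \<I>\<close> unfolding independent_sets_def by blast
    qed
  qed
  show "(case (I - closed_nbhd v, I \<inter> closed_nbhd v) of (J, S) \<Rightarrow> J \<union> S) = I" for I
    by auto
  show "(\<lambda>I. (I - closed_nbhd v, I \<inter> closed_nbhd v)) (case p of (J, S) \<Rightarrow> J \<union> S) = p"
    if p: "p \<in> (SIGMA J:indep_avoiding v. insert {v} (Pow (free_nbrs v J)))" for p
  proof -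
    obtain J S where JS: "p = (J, S)"
      by fastforce
    have "J \<inter> closed_nbhd v = {}" "S \<subseteq> closed_nbhd v"
      using p free_nbrs_subset[of v J] by (auto simp: JS indep_avoiding_def closed_nbhd_def)
    then show ?thesis
      unfolding JS by auto
  qed
qed

lemma sum_indep_sets_decompose:
  assumes v: "v \<in> V"
  shows "(\<Sum>I\<in>\<I>. f I)
    = (\<Sum>J\<in>indep_avoiding v. f (insert v J) + (\<Sum>S\<in>Pow (free_nbrs v J). f (J \<union> S)))"
proof -
  have "(\<Sum>I\<in>\<I>. f I) = (\<Sum>I\<in>\<I>. (\<lambda>(J, S). f (J \<union> S)) (I - closed_nbhd v, I \<inter> closed_nbhd v))"
    by (simp add: Un_Diff_Int)
  also have "\<dots> = (\<Sum>(J, S)\<in>(SIGMA J:indep_avoiding v. insert {v} (Pow (free_nbrs v J))). f (J \<union> S))"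
    by (rule sum.reindex_bij_betw[OF indep_sets_decompose[OF v]])
  also have "\<dots> = (\<Sum>J\<in>indep_avoiding v. \<Sum>S\<in>insert {v} (Pow (free_nbrs v J)). f (J \<union> S))"
    by (rule sum.Sigma[symmetric]) (use finite_indep_avoiding finite_free_nbrs in auto)
  also have "\<dots> = (\<Sum>J\<in>indep_avoiding v. f (insert v J) + (\<Sum>S\<in>Pow (free_nbrs v J). f (J \<union> S)))"
  proof (rule sum.cong)
    fix J
    have "{v} \<notin> Pow (free_nbrs v J)"
      using free_nbrs_subset not_in_nbhd by auto
    then show "(\<Sum>S\<in>insert {v} (Pow (free_nbrs v J)). f (J \<union> S))
             = f (insert v J) + (\<Sum>S\<in>Pow (free_nbrs v J). f (J \<union> S))"
      using finite_free_nbrs by simp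
  qed simp
  finally show ?thesis .
qed

section \<open>The hard-core model\<close>

definition indep_poly :: "real \<Rightarrow> real" where
  "indep_poly l = (\<Sum>I\<in>\<I>. l ^ card I)"

text \<open>\<open>\<lambda> Z'(\<lambda>)\<close> for the independence polynomial \<open>Z\<close>; divided by \<open>Z(\<lambda>)\<close> it is the expected size of
  an independent set drawn from the hard-core model at fugacity \<open>\<lambda>\<close>.\<close>
definition indep_size_poly :: "real \<Rightarrow> real" where
  "indep_size_poly l = (\<Sum>I\<in>\<I>. real (card I) * l ^ card I)"

lemma indep_poly_ge_one: "0 \<le> l \<Longrightarrow> 1 \<le> indep_poly l"
  using sum.remove[OF finite_indep_sets empty_indep_set, of "\<lambda>I. l ^ card I"]
    sum_nonneg[of "\<I> - {{}}" "\<lambda>I. l ^ card I"]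
  by (simp add: indep_poly_def)

lemma indep_size_poly_nonneg: "0 \<le> l \<Longrightarrow> 0 \<le> indep_size_poly l"
  unfolding indep_size_poly_def by (intro sum_nonneg) auto

lemma indep_poly_pos: "0 \<le> l \<Longrightarrow> 0 < indep_poly l"
  using indep_poly_ge_one[of l] by linarith

lemma indep_size_ratio_nonneg: "0 \<le> l \<Longrightarrow> 0 \<le> indep_size_poly l / indep_poly l"
  using indep_size_poly_nonneg[of l] indep_poly_pos[of l] by simp

lemma indep_poly_one: "indep_poly 1 = card \<I>"
  by (simp add: indep_poly_def)

lemma indep_poly_eq_sum_avoiding:
  assumes v: "v \<in> V"
  shows "indep_poly l
    = (\<Sum>J\<in>indep_avoiding v. l ^ card J * (l + (1 + l) ^ card (free_nbrs v J)))"
  unfolding indep_poly_def sum_indep_sets_decompose[OF v]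
proof (rule sum.cong)
  fix J assume J: "J \<in> indep_avoiding v"
  have "(\<Sum>S\<in>Pow (free_nbrs v J). l ^ card (J \<union> S)) = (\<Sum>S\<in>Pow (free_nbrs v J). l ^ card J * l ^ card S)"
    by (rule sum.cong) (simp_all add: card_Un_free_nbrs[OF J] power_add)
  also have "\<dots> = l ^ card J * (1 + l) ^ card (free_nbrs v J)"
    by (simp add: sum_Pow_power finite_free_nbrs flip: sum_distrib_left)
  finally show "l ^ card (insert v J) + (\<Sum>S\<in>Pow (free_nbrs v J). l ^ card (J \<union> S))
              = l ^ card J * (l + (1 + l) ^ card (free_nbrs v J))"
    by (simp add: card_insert_avoiding[OF J] algebra_simps)
qed simp

lemma occupancy_eq_sum_avoiding:
  fixes l :: real
  assumes v: "v \<in> V"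
  shows "(\<Sum>I\<in>\<I>. if v \<in> I then l ^ card I else 0) = (\<Sum>J\<in>indep_avoiding v. l ^ card J * l)"
  unfolding sum_indep_sets_decompose[OF v]
proof (rule sum.cong)
  fix J assume J: "J \<in> indep_avoiding v"
  have "v \<notin> J \<union> S" if "S \<in> Pow (free_nbrs v J)" for S
    using J that free_nbrs_subset[of v J] not_in_nbhd
    by (auto simp: indep_avoiding_def closed_nbhd_def)
  then show "(if v \<in> insert v J then l ^ card (insert v J) else 0)
           + (\<Sum>S\<in>Pow (free_nbrs v J). if v \<in> J \<union> S then l ^ card (J \<union> S) else 0)
           = l ^ card J * l"
    by (simp add: card_insert_avoiding[OF J] power_commutes)
qed simp

lemma nbhd_occupancy_eq_sum_avoiding:
  fixes l :: real
  assumes v: "v \<in> V"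
  shows "(\<Sum>I\<in>\<I>. card (I \<inter> nbhd v) * l ^ card I)
    = (\<Sum>J\<in>indep_avoiding v. l ^ card J * (\<Sum>S\<in>Pow (free_nbrs v J). card S * l ^ card S))"
  unfolding sum_indep_sets_decompose[OF v]
proof (rule sum.cong)
  fix J assume J: "J \<in> indep_avoiding v"
  have "insert v J \<inter> nbhd v = {}"
    using J not_in_nbhd by (auto simp: indep_avoiding_def closed_nbhd_def)
  moreover have "(J \<union> S) \<inter> nbhd v = S" if "S \<in> Pow (free_nbrs v J)" for S
    using J that free_nbrs_subset[of v J] by (auto simp: indep_avoiding_def closed_nbhd_def)
  ultimately have "(\<Sum>S\<in>Pow (free_nbrs v J). card ((J \<union> S) \<inter> nbhd v) * l ^ card (J \<union> S))
      = (\<Sum>S\<in>Pow (free_nbrs v J). l ^ card J * (card S * l ^ card S))"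
    by (intro sum.cong) (simp_all add: card_Un_free_nbrs[OF J] power_add)
  then show "real (card (insert v J \<inter> nbhd v)) * l ^ card (insert v J)
      + (\<Sum>S\<in>Pow (free_nbrs v J). real (card ((J \<union> S) \<inter> nbhd v)) * l ^ card (J \<union> S))
      = l ^ card J * (\<Sum>S\<in>Pow (free_nbrs v J). real (card S) * l ^ card S)"
    using \<open>insert v J \<inter> nbhd v = {}\<close> by (simp add: sum_distrib_left)
qed simp

lemma indep_size_poly_eq_sum_occupancy:
  "indep_size_poly l = (\<Sum>v\<in>V. \<Sum>I\<in>\<I>. if v \<in> I then l ^ card I else 0)"
proof -
  have "(\<Sum>v\<in>V. if v \<in> I then l ^ card I else 0) = card I * l ^ card I" if "I \<in> \<I>" for I
  proof -
    have "V \<inter> I = I"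
      using that indep_sets_subset_Pow by auto
    then show ?thesis
      using sum.inter_restrict[OF finite_V, of "\<lambda>_. l ^ card I" I] by simp
  qed
  then show ?thesis
    unfolding indep_size_poly_def by (subst sum.swap) simp
qed

lemma sum_nbhd_occupancy_le:
  fixes l D :: real
  assumes l: "0 \<le> l" and deg: "\<And>u. u \<in> V \<Longrightarrow> card (nbhd u) \<le> D"
  shows "(\<Sum>v\<in>V. \<Sum>I\<in>\<I>. card (I \<inter> nbhd v) * l ^ card I) \<le> D * indep_size_poly l"
proof -
  have double_count: "(\<Sum>v\<in>V. real (card (I \<inter> nbhd v))) = (\<Sum>u\<in>I. real (card (nbhd u)))"
    if I: "I \<in> \<I>" for I
  proof -
    have "(\<Sum>v\<in>V. real (card (I \<inter> nbhd v))) = (\<Sum>v\<in>V. \<Sum>u\<in>I. if v \<in> nbhd u then 1 else 0)"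
      using finite_indep_set[OF I] by (simp add: sum.If_cases in_nbhd_commute Int_def)
    also have "\<dots> = (\<Sum>u\<in>I. \<Sum>v\<in>V. if v \<in> nbhd u then 1 else 0)"
      by (rule sum.swap)
    also have "\<dots> = (\<Sum>u\<in>I. real (card (nbhd u)))"
      using nbhd_subset by (simp add: sum.If_cases finite_V Int_absorb1 Int_commute)
    finally show ?thesis .
  qed
  have "(\<Sum>v\<in>V. \<Sum>I\<in>\<I>. card (I \<inter> nbhd v) * l ^ card I)
      = (\<Sum>I\<in>\<I>. (\<Sum>u\<in>I. real (card (nbhd u))) * l ^ card I)"
    by (subst sum.swap) (simp add: double_count sum_distrib_right[symmetric])
  also have "\<dots> \<le> (\<Sum>I\<in>\<I>. (card I * D) * l ^ card I)"
  proof (rule sum_mono)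
    fix I assume "I \<in> \<I>"
    then have "(\<Sum>u\<in>I. real (card (nbhd u))) \<le> (\<Sum>u\<in>I. D)"
      using deg indep_sets_subset_Pow by (intro sum_mono) auto
    then show "(\<Sum>u\<in>I. real (card (nbhd u))) * l ^ card I \<le> (card I * D) * l ^ card I"
      using l by (intro mult_right_mono) auto
  qed
  also have "\<dots> = D * indep_size_poly l"
    by (simp add: indep_size_poly_def sum_distrib_left algebra_simps)
  finally show ?thesis .
qed

lemma indep_size_poly_ge_occupied:
  fixes l :: real
  assumes l: "0 < l"
  shows "l / (1 + l) * (\<Sum>v\<in>V. \<Sum>J\<in>indep_avoiding v.
           l ^ card J * (l + (1 + l) ^ card (free_nbrs v J)) * exp (- (l * card (free_nbrs v J))))
    \<le> indep_size_poly l"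
proof -
  have "l / (1 + l) * (\<Sum>v\<in>V. \<Sum>J\<in>indep_avoiding v.
           l ^ card J * (l + (1 + l) ^ card (free_nbrs v J)) * exp (- (l * card (free_nbrs v J))))
      = (\<Sum>v\<in>V. \<Sum>J\<in>indep_avoiding v. l ^ card J * (l / (1 + l)
           * ((l + (1 + l) ^ card (free_nbrs v J)) * exp (- (l * card (free_nbrs v J))))))"
    by (simp add: sum_distrib_left algebra_simps)
  also have "\<dots> \<le> (\<Sum>v\<in>V. \<Sum>J\<in>indep_avoiding v. l ^ card J * l)"
    using l by (intro sum_mono mult_left_mono occupied_weight_le) auto
  also have "\<dots> = indep_size_poly l"
    by (simp add: indep_size_poly_eq_sum_occupancy occupancy_eq_sum_avoiding)
  finally show ?thesis .
qed

lemma indep_size_poly_ge_free_nbrs: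
  fixes l D :: real
  assumes l: "0 < l" and deg: "\<And>u. u \<in> V \<Longrightarrow> card (nbhd u) \<le> D"
  shows "l / (1 + l)^2 * (\<Sum>v\<in>V. \<Sum>J\<in>indep_avoiding v.
           l ^ card J * (l + (1 + l) ^ card (free_nbrs v J)) * card (free_nbrs v J))
    \<le> D * indep_size_poly l"
proof -
  have "l / (1 + l)^2 * (\<Sum>v\<in>V. \<Sum>J\<in>indep_avoiding v.
           l ^ card J * (l + (1 + l) ^ card (free_nbrs v J)) * card (free_nbrs v J))
      = (\<Sum>v\<in>V. \<Sum>J\<in>indep_avoiding v. l ^ card J * (l / (1 + l)^2
           * ((l + (1 + l) ^ card (free_nbrs v J)) * card (free_nbrs v J))))"
    by (simp add: sum_distrib_left algebra_simps)
  also have "\<dots> \<le> (\<Sum>v\<in>V. \<Sum>J\<in>indep_avoiding v.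
                    l ^ card J * (\<Sum>S\<in>Pow (free_nbrs v J). card S * l ^ card S))"
    using l by (intro sum_mono mult_left_mono sum_Pow_card_power_ge finite_free_nbrs) auto
  also have "\<dots> = (\<Sum>v\<in>V. \<Sum>I\<in>\<I>. card (I \<inter> nbhd v) * l ^ card I)"
    by (simp add: nbhd_occupancy_eq_sum_avoiding)
  also have "\<dots> \<le> D * indep_size_poly l"
    using l deg by (intro sum_nbhd_occupancy_le) auto
  finally show ?thesis .
qed

text \<open>
  With \<open>\<mu>\<close> the mean number of free neighbours, the average occupancy of a vertex is at least
  \<open>\<lambda> e\<^sup>-\<^sup>\<lambda>\<^sup>\<mu>/(1+\<lambda>)\<close> by Jensen, while the average occupancy of a neighbourhood, at most \<open>D\<close>
  times that of a vertex, is at least \<open>\<lambda>\<mu>/(1+\<lambda>)\<^sup>2\<close>; the first bound serves if \<open>\<lambda>\<mu> \<le> t\<close>,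
  the second otherwise.
\<close>
lemma occupancy_ratio_ge:
  fixes l D t :: real
  assumes l: "0 < l" and D: "0 < D" and t: "0 \<le> t" "t \<le> D * (l * exp (- t))"
    and deg: "\<And>u. u \<in> V \<Longrightarrow> card (nbhd u) \<le> D"
  shows "card V * t / (D * (1 + l)^2) \<le> indep_size_poly l / indep_poly l"
proof (cases "V = {}")
  case True
  then show ?thesis
    using l indep_size_ratio_nonneg[of l] by simp
next
  case False
  define A where "A = (SIGMA v:V. indep_avoiding v)"
  define q where "q = (\<lambda>(v, J). l ^ card J * (l + (1 + l) ^ card (free_nbrs v J)))"
  define y where "y = (\<lambda>(v, J). real (card (free_nbrs v J)))"
  define Q where "Q = (\<Sum>p\<in>A. q p)"
  define \<mu> where "\<mu> = (\<Sum>p\<in>A. q p * y p) / Q"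
  have A: "finite A"
    using finite_V finite_indep_avoiding by (simp add: A_def)
  have sum_A: "(\<Sum>p\<in>A. f p) = (\<Sum>v\<in>V. \<Sum>J\<in>indep_avoiding v. f (v, J))" for f :: "_ \<Rightarrow> real"
    unfolding A_def using finite_V finite_indep_avoiding by (simp add: sum.Sigma)
  have Z: "0 < indep_poly l"
    using indep_poly_pos l by simp
  have "Q = (\<Sum>v\<in>V. indep_poly l)"
    unfolding Q_def sum_A by (intro sum.cong) (simp_all add: q_def indep_poly_eq_sum_avoiding)
  then have Q_eq: "Q = card V * indep_poly l"
    by simp
  then have Q: "0 < Q"
    using False finite_V Z by (simp add: card_gt_0_iff)
  have q: "0 \<le> q p" for p
    using l by (simp add: q_def split: prod.splits)
  have "(\<Sum>p\<in>A. q p * - (l * y p)) / Q = - (l * \<mu>)"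
    by (simp add: \<mu>_def sum_distrib_left sum_negf mult.left_commute)
  then have "Q * exp (- (l * \<mu>)) \<le> (\<Sum>p\<in>A. q p * exp (- (l * y p)))"
    using exp_weighted_mean_le[OF A q Q[unfolded Q_def], of "\<lambda>p. - (l * y p)"] by (simp add: Q_def)
  then have "l / (1 + l) * (Q * exp (- (l * \<mu>))) \<le> l / (1 + l) * (\<Sum>p\<in>A. q p * exp (- (l * y p)))"
    using l by (intro mult_left_mono) auto
  also have "\<dots> \<le> indep_size_poly l"
    using indep_size_poly_ge_occupied[OF l] by (simp add: sum_A q_def y_def)
  finally have occupied: "l / (1 + l) * (Q * exp (- (l * \<mu>))) \<le> indep_size_poly l" .
  have nbrs: "l / (1 + l)^2 * (Q * \<mu>) \<le> D * indep_size_poly l"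
    using indep_size_poly_ge_free_nbrs[OF l deg] Q
    by (simp add: \<mu>_def sum_A q_def y_def)
  have "Q * t / (D * (1 + l)^2) \<le> indep_size_poly l"
  proof (cases "l * \<mu> \<le> t")
    case True
    have "t / D \<le> l * exp (- t)"
      using t D by (simp add: pos_divide_le_eq mult.commute)
    then have "Q * (t / D) / (1 + l)^2 \<le> Q * (l * exp (- t)) / (1 + l)^2"
      using Q by (intro divide_right_mono mult_left_mono) auto
    then have "Q * t / (D * (1 + l)^2) \<le> Q * (l * exp (- t)) / (1 + l)^2"
      by simp
    also have "\<dots> \<le> Q * (l * exp (- t)) / (1 + l)"
    proof (rule frac_le)
      show "1 + l \<le> (1 + l)^2"
        using l mult_left_mono[of 1 "1 + l" "1 + l"] by (simp add: power2_eq_square)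
    qed (use l Q in auto)
    also have "\<dots> = l / (1 + l) * (Q * exp (- t))"
      by simp
    also have "\<dots> \<le> l / (1 + l) * (Q * exp (- (l * \<mu>)))"
      using True l Q by (intro mult_left_mono) auto
    finally show ?thesis
      using occupied by linarith
  next
    case False
    then have "Q * t / (1 + l)^2 \<le> l / (1 + l)^2 * (Q * \<mu>)"
      using l Q by (simp add: field_simps mult_left_mono)
    then have "Q * t / (1 + l)^2 \<le> D * indep_size_poly l"
      using nbrs by simp
    then have "Q * t \<le> D * indep_size_poly l * (1 + l)^2"
      using l by (simp add: pos_divide_le_eq)
    then show ?thesis
      using D l by (simp add: pos_divide_le_eq mult_ac)
  qed
  then show ?thesis
    using Z D l by (simp add: Q_eq field_simps)
qed

lemma ln_indep_poly_ge_tangent: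
  assumes l: "0 < l" and \<mu>: "0 < \<mu>"
  shows "ln (indep_poly l) + ln (\<mu> / l) * (indep_size_poly l / indep_poly l) \<le> ln (indep_poly \<mu>)"
proof -
  define s where "s = ln (\<mu> / l)"
  have Z: "0 < indep_poly l" "0 < indep_poly \<mu>"
    using indep_poly_pos l \<mu> by simp_all
  have "\<mu> ^ k = l ^ k * exp (s * k)" for k :: nat
  proof -
    have "exp (s * k) = exp s ^ k"
      by (simp add: mult.commute flip: exp_of_nat_mult)
    also have "\<dots> = (\<mu> / l) ^ k"
      using l \<mu> by (simp add: s_def)
    finally show ?thesis
      using l by (simp add: power_divide)
  qed
  then have "indep_poly \<mu> = (\<Sum>I\<in>\<I>. l ^ card I * exp (s * card I))"
    by (simp add: indep_poly_def)
  also have "indep_poly l * exp (s * indep_size_poly l / indep_poly l) \<le> \<dots>"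
    using exp_weighted_mean_le[OF finite_indep_sets, of "\<lambda>I. l ^ card I" "\<lambda>I. s * card I"] l Z
    by (simp add: indep_poly_def indep_size_poly_def sum_distrib_left algebra_simps)
  finally have "ln (indep_poly l * exp (s * indep_size_poly l / indep_poly l)) \<le> ln (indep_poly \<mu>)"
    using Z by (subst ln_le_cancel_iff) auto
  then show ?thesis
    using Z by (simp add: ln_mult s_def)
qed

lemma ln_indep_poly_ge_sum_ratios:
  fixes l h :: real and m :: nat
  assumes l: "0 < l"
  shows "ln (indep_poly l) + h * (\<Sum>j<m. indep_size_poly (l * exp (j * h)) / indep_poly (l * exp (j * h)))
    \<le> ln (indep_poly (l * exp (m * h)))"
proof (induction m)
  case 0
  then show ?case by simp
next
  case (Suc m)
  have "ln (indep_poly (l * exp (m * h))) + h * (indep_size_poly (l * exp (m * h)) / indep_poly (l * exp (m * h)))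
      \<le> ln (indep_poly (l * exp (Suc m * h)))"
    using ln_indep_poly_ge_tangent[of "l * exp (m * h)" "l * exp (Suc m * h)"] l
    by (simp add: distrib_right exp_add)
  then show ?case
    using Suc by (simp add: algebra_simps)
qed

section \<open>Lower bounds for the number of independent sets\<close>

lemma card_indep_sets_ge_one: "1 \<le> card \<I>"
  using indep_poly_ge_one[of 1] by (simp add: indep_poly_one)

lemma card_indep_sets_ge_degree: "2 ^ card (nbhd v) \<le> card \<I>"
proof -
  have "Pow (nbhd v) \<subseteq> \<I>"
    using indep_set_subset[OF nbhd_indep_set] by blast
  then have "card (Pow (nbhd v)) \<le> card \<I>"
    using finite_indep_sets by (intro card_mono) auto
  then show ?thesis
    using finite_nbhd by (simp add: card_Pow)
qed

lemma occupancy_ratio_ge_exp: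
  fixes D d u :: real
  assumes D: "1 \<le> D" and deg: "\<And>u. u \<in> V \<Longrightarrow> card (nbhd u) \<le> D"
    and d: "0 < d" "d < 1" and u: "0 \<le> u" and large: "2 / d \<le> exp (d * u / 2)"
  shows "card V * ((1 - d) * u) / (D * (1 + exp u / D)^2)
    \<le> indep_size_poly (exp u / D) / indep_poly (exp u / D)"
proof (rule occupancy_ratio_ge)
  have "(1 - d) * u \<le> u"
    using d u by (simp add: mult_left_le_one_le)
  also have "\<dots> \<le> exp (d * u)"
    using self_le_exp_mult[OF d(1) u large] .
  also have "exp (d * u) = D * (exp u / D * exp (- ((1 - d) * u)))"
    using D by (simp add: algebra_simps flip: exp_add)
  finally show "(1 - d) * u \<le> D * (exp u / D * exp (- ((1 - d) * u)))" .
qed (use D d u deg in auto)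

text \<open>The occupancy bound integrated over \<open>\<lambda> = e\<^sup>j\<^sup>h / D\<close>, \<open>j < m\<close>, \<open>h = log D / m\<close>.\<close>
theorem ln_card_indep_sets_ge_max_degree:
  fixes D d :: real and m :: nat
  assumes D: "1 \<le> D" and deg: "\<And>u. u \<in> V \<Longrightarrow> card (nbhd u) \<le> D"
    and m: "0 < m" and d: "0 < d" "d < 1" and large: "2 / d \<le> exp (d * (ln D / m) / 2)"
  shows "card V * (ln D)^2 / (2 * D) * ((1 - d) * (real m - 1) / (m * (1 + exp (- (ln D / m)))^2))
    \<le> ln (card \<I>)"
proof -
  define h where "h = ln D / m"
  define x where "x = exp (- h)"
  define K where "K = card V * (1 - d) * h / (D * (1 + x)^2)"
  have "0 < x"
    by (simp add: x_def)
  have h: "0 \<le> h"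
    using D by (simp add: h_def)
  have D_eq: "D = exp (m * h)"
    using D m by (simp add: h_def)
  have ratio: "K * j \<le> indep_size_poly (exp (j * h) / D) / indep_poly (exp (j * h) / D)"
    if j: "j < m" for j :: nat
  proof (cases "j = 0")
    case True
    then show ?thesis
      using indep_size_ratio_nonneg D by simp
  next
    case False
    define lj where "lj = exp (j * h) / D"
    have lj: "0 < lj"
      using D by (simp add: lj_def)
    have "h \<le> j * h"
      using False h by (simp add: mult_le_cancel_right1)
    then have "d * h / 2 \<le> d * (j * h) / 2"
      using d by simp
    then have "2 / d \<le> exp (d * (j * h) / 2)"
      using large unfolding h_def[symmetric] by (meson exp_le_cancel_iff order_trans)
    then have occupancy: "card V * ((1 - d) * (j * h)) / (D * (1 + lj)^2)
        \<le> indep_size_poly lj / indep_poly lj"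
      using occupancy_ratio_ge_exp[OF D deg d] h by (simp add: lj_def)
    have "(real j - real m) * h \<le> (- 1) * h"
      using j h by (intro mult_right_mono) (auto simp: nat_less_real_le)
    then have "j * h - m * h \<le> - h"
      by (simp add: left_diff_distrib)
    then have "lj \<le> x"
      by (simp add: lj_def D_eq x_def flip: exp_diff)
    then have "D * (1 + lj)^2 \<le> D * (1 + x)^2"
      using D lj by (intro mult_left_mono power_mono) auto
    then have "card V * ((1 - d) * (j * h)) / (D * (1 + x)^2)
        \<le> card V * ((1 - d) * (j * h)) / (D * (1 + lj)^2)"
      using D d h lj by (intro frac_le) auto
    moreover have "K * j = card V * ((1 - d) * (j * h)) / (D * (1 + x)^2)"
      by (simp add: K_def)
    ultimately show ?thesis
      using occupancy by (simp add: lj_def)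
  qed
  have "h * (\<Sum>j<m. K * j) \<le> h * (\<Sum>j<m. indep_size_poly (exp (j * h) / D) / indep_poly (exp (j * h) / D))"
    using ratio h by (intro mult_left_mono sum_mono) auto
  also have "\<dots> \<le> ln (indep_poly (1 / D)) + h * (\<Sum>j<m. indep_size_poly (1 / D * exp (j * h))
                                                            / indep_poly (1 / D * exp (j * h)))"
    using indep_poly_ge_one[of "1 / D"] D by simp
  also have "\<dots> \<le> ln (card \<I>)"
    using ln_indep_poly_ge_sum_ratios[of "1 / D" h m] D by (simp add: D_eq indep_poly_one)
  finally have le: "h * (\<Sum>j<m. K * j) \<le> ln (card \<I>)" .
  have "(\<Sum>j<m. real j) = m * (real m - 1) / 2"
    by (induction m) (simp_all add: algebra_simps)
  then have "h * (\<Sum>j<m. K * j) = h * K * (m * (real m - 1) / 2)"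
    by (simp flip: sum_distrib_left)
  also have "\<dots> = card V * (ln D)^2 / (2 * D) * ((1 - d) * (real m - 1) / (m * (1 + x)^2))"
    using m D \<open>0 < x\<close> by (simp add: K_def h_def power2_eq_square[of "ln D"] field_simps)
  finally show ?thesis
    using le unfolding x_def h_def by linarith
qed

end

section \<open>The asymptotic bound\<close>

definition ln_size_threshold :: "real \<Rightarrow> nat \<Rightarrow> real" where
  "ln_size_threshold \<eta> m = max (2 * sqrt (2 * ln 2)) (max (2 * m * ln (6 / \<eta>)) (16 * m / \<eta> * ln (8 / \<eta>)))"

context triangle_free_graph
begin

text \<open>
  With \<open>D = \<surd>N log N / (2 \<surd>(2 log 2))\<close> the bound \<open>2\<^sup>D\<close> from a vertex of degree at least \<open>D\<close>
  and the occupancy bound \<open>N (log D)\<^sup>2 / (2D) \<ge> N (log N)\<^sup>2 / (8D)\<close> coincide to first order.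
\<close>
lemma card_indep_sets_ge_exp:
  fixes \<eta> :: real and m :: nat
  defines "N \<equiv> real (card V)"
  assumes \<eta>: "0 < \<eta>" "\<eta> < 1" and m: "4 / \<eta> \<le> m" and threshold: "ln_size_threshold \<eta> m \<le> ln N"
  shows "exp ((1 - \<eta>) * (sqrt (2 * ln 2) / 4) * sqrt N * ln N) \<le> card \<I>"
proof -
  have large: "2 * sqrt (2 * ln 2) \<le> ln N" "2 * m * ln (6 / \<eta>) \<le> ln N"
      "16 * m / \<eta> * ln (8 / \<eta>) \<le> ln N"
    using threshold by (simp_all add: ln_size_threshold_def)
  define c where "c = sqrt (2 * ln 2) / 4"
  define D where "D = sqrt N * ln N / (8 * c)"
  have c: "0 < c" "8 * c * c = ln 2"
    by (simp_all add: c_def)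
  have "0 < sqrt (2 * ln 2)"
    by simp
  then have lnN: "0 < ln N"
    using large(1) by linarith
  then have "N \<noteq> 0"
    by auto
  moreover have "0 \<le> N"
    by (simp add: N_def)
  ultimately have N: "1 < N"
    using lnN by (simp add: ln_gt_zero_iff)
  have "sqrt N * 1 \<le> sqrt N * (ln N / (8 * c))"
    using large(1) c N by (intro mult_left_mono) (auto simp: c_def)
  then have D_ge: "sqrt N \<le> D"
    by (simp add: D_def)
  moreover have "1 \<le> sqrt N"
    using N by simp
  ultimately have D: "1 \<le> D"
    by linarith
  have "ln (sqrt N) \<le> ln D"
    using D_ge N D by (subst ln_le_cancel_iff) auto
  then have ln_D: "ln N / 2 \<le> ln D"
    using N by (simp add: ln_sqrt)
  have "(1 - \<eta>) * (c * sqrt N * ln N) \<le> ln (card \<I>)"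
  proof (cases "\<exists>v\<in>V. D \<le> card (nbhd v)")
    case True
    then obtain v where "D \<le> card (nbhd v)"
      by blast
    have "D * ln 2 = c * sqrt N * ln N"
      using c by (simp add: D_def field_simps)
    moreover have "D * ln 2 \<le> card (nbhd v) * ln 2"
      using \<open>D \<le> card (nbhd v)\<close> by (intro mult_right_mono) auto
    ultimately have "exp (c * sqrt N * ln N) \<le> exp (card (nbhd v) * ln 2)"
      by simp
    also have "\<dots> = 2 ^ card (nbhd v)"
      by (simp add: exp_of_nat_mult)
    also have "\<dots> \<le> card \<I>"
      using card_indep_sets_ge_degree by (metis of_nat_le_iff of_nat_numeral of_nat_power)
    finally have "c * sqrt N * ln N \<le> ln (card \<I>)"
      using card_indep_sets_ge_one by (simp add: ln_ge_iff)
    moreover have "(1 - \<eta>) * (c * sqrt N * ln N) \<le> c * sqrt N * ln N"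
      using \<eta> c lnN N by (simp add: mult_le_cancel_right1)
    ultimately show ?thesis
      by linarith
  next
    case False
    then have deg: "\<And>u. u \<in> V \<Longrightarrow> card (nbhd u) \<le> D"
      by (simp add: not_le less_imp_le)
    define d where "d = \<eta> / 4"
    have "0 < 4 / \<eta>"
      using \<eta> by simp
    then have m0: "0 < m"
      using m by linarith
    have "2 / d \<le> exp (d * (ln D / m) / 2)"
    proof -
      have "16 * m / \<eta> * ln (8 / \<eta>) \<le> 2 * ln D"
        using large(3) ln_D by linarith
      then have "ln (8 / \<eta>) \<le> \<eta> / 4 * (ln D / m) / 2"
        using \<eta> m0 by (simp add: field_simps)
      then have "exp (ln (8 / \<eta>)) \<le> exp (d * (ln D / m) / 2)"
        by (simp add: d_def)
      then show ?thesis
        using \<eta> by (simp add: d_def)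
    qed
    then have bound: "N * (ln D)^2 / (2 * D) * ((1 - d) * (real m - 1) / (m * (1 + exp (- (ln D / m)))^2))
        \<le> ln (card \<I>)"
      using ln_card_indep_sets_ge_max_degree[OF D deg m0] \<eta> by (simp add: N_def d_def)
    have "exp (- (ln D / m)) \<le> \<eta> / 6"
    proof -
      have "2 * m * ln (6 / \<eta>) \<le> 2 * ln D"
        using large(2) ln_D by linarith
      then have "ln (6 / \<eta>) \<le> ln D / m"
        using m0 by (simp add: field_simps)
      then have "exp (- (ln D / m)) \<le> exp (- ln (6 / \<eta>))"
        by simp
      also have "\<dots> = \<eta> / 6"
        using \<eta> by (simp add: exp_minus)
      finally show ?thesis .
    qed
    then have factor: "1 - \<eta> \<le> (1 - d) * (real m - 1) / (m * (1 + exp (- (ln D / m)))^2)"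
      using correction_factor_ge[OF \<eta> m] by (simp add: d_def)
    have "sqrt N * sqrt N = N"
      using N by simp
    then have "c * sqrt N * ln N = N * (ln N / 2)^2 / (2 * D)"
      using c N lnN by (simp add: D_def power2_eq_square field_simps)
    also have "\<dots> \<le> N * (ln D)^2 / (2 * D)"
      using ln_D lnN N D by (intro divide_right_mono mult_left_mono power_mono) auto
    finally have "(1 - \<eta>) * (c * sqrt N * ln N)
        \<le> ((1 - d) * (real m - 1) / (m * (1 + exp (- (ln D / m)))^2)) * (N * (ln D)^2 / (2 * D))"
      using factor \<eta> c lnN N by (intro mult_mono) auto
    then have "(1 - \<eta>) * (c * sqrt N * ln N)
        \<le> N * (ln D)^2 / (2 * D) * ((1 - d) * (real m - 1) / (m * (1 + exp (- (ln D / m)))^2))"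
      by (simp only: mult.commute)
    then show ?thesis
      using bound by linarith
  qed
  then have "exp ((1 - \<eta>) * (c * sqrt N * ln N)) \<le> exp (ln (card \<I>))"
    by simp
  also have "\<dots> = card \<I>"
    using card_indep_sets_ge_one by simp
  finally show ?thesis
    by (simp only: c_def mult.assoc)
qed

end

theorem corollary1p3:
  shows "\<forall>\<epsilon>>0::real. \<exists>n0::nat. \<forall>(V::nat set) (E::nat set set).
     simple_graph V E \<and> triangle_free V E \<and> card V \<ge> n0 \<longrightarrow>
     real (card (independent_sets V E)) \<ge>
       exp ((sqrt (2 * ln 2) / 4 - \<epsilon>) * sqrt (real (card V)) * ln (real (card V)))"
proof (intro allI impI)
  fix \<epsilon> :: real assume \<epsilon>: "\<epsilon> > 0"
  define c where "c = sqrt (2 * ln 2) / 4"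
  define \<eta> where "\<eta> = min (\<epsilon> / c) (1 / 2)"
  define m where "m = nat \<lceil>4 / \<eta>\<rceil>"
  have \<eta>: "0 < \<eta>" "\<eta> < 1" "\<eta> * c \<le> \<epsilon>"
    using \<epsilon> by (auto simp: c_def \<eta>_def min_def pos_le_divide_eq)
  have m: "4 / \<eta> \<le> m"
    unfolding m_def by (rule real_nat_ceiling_ge)
  show "\<exists>n0::nat. \<forall>(V::nat set) (E::nat set set).
     simple_graph V E \<and> triangle_free V E \<and> card V \<ge> n0 \<longrightarrow>
     real (card (independent_sets V E)) \<ge>
       exp ((sqrt (2 * ln 2) / 4 - \<epsilon>) * sqrt (real (card V)) * ln (real (card V)))"
  proof (intro exI allI impI)
    fix V :: "nat set" and E :: "nat set set"
    assume H: "simple_graph V E \<and> triangle_free V E \<and> nat \<lceil>exp (ln_size_threshold \<eta> m)\<rceil> \<le> card V"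
    then interpret triangle_free_graph V E
      by unfold_locales auto
    have "exp (ln_size_threshold \<eta> m) \<le> card V"
      using H real_nat_ceiling_ge[of "exp (ln_size_threshold \<eta> m)"] by linarith
    then have threshold: "ln_size_threshold \<eta> m \<le> ln (card V)"
      by (meson exp_gt_zero ln_ge_iff order.strict_trans2)
    moreover have "0 \<le> ln_size_threshold \<eta> m"
      by (simp add: ln_size_threshold_def le_max_iff_disj)
    ultimately have "0 \<le> sqrt (card V) * ln (card V)"
      by simp
    moreover have "c - \<epsilon> \<le> (1 - \<eta>) * c"
      using \<eta>(3) by (simp add: algebra_simps)
    ultimately have "(c - \<epsilon>) * (sqrt (card V) * ln (card V)) \<le> (1 - \<eta>) * c * (sqrt (card V) * ln (card V))"
      by (rule mult_right_mono[rotated])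
    then show "exp ((sqrt (2 * ln 2) / 4 - \<epsilon>) * sqrt (card V) * ln (card V)) \<le> card \<I>"
      using card_indep_sets_ge_exp[OF \<eta>(1,2) m threshold]
      unfolding c_def mult.assoc by (meson exp_le_cancel_iff order_trans)
  qed
qed

end
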